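(* Let $T$ be a tree of order $n$, and let $d_i$ denote the number of dominating sets of $T$ of size $i$. Then $$d_{\gamma(T)}\le d_{\gamma(T)+1}\le\cdots\le d_{\left\lfloor\frac{n+2\gamma(T)+1}{3}\right\rfloor}.$$
   Context: A dominating set of a graph $G=(V,E)$ is a set $S\subseteq V$ such that every vertex is in $S$ or adjacent to a vertex of $S$. $\gamma(T)$ is the minimum size of a dominating set of $T$. *)

theory Defs
  imports Main
begin

definition simple_graph :: "'a set \<Rightarrow> 'a set set \<Rightarrow> bool" where
  "simple_graph V E \<longleftrightarrow> finite V \<and> (\<forall>e\<in>E. e \<subseteq> V \<and> card e = 2)"

definition adj :: "'a set set \<Rightarrow> 'a \<Rightarrow> 'a \<Rightarrow> bool" where
  "adj E u v \<longleftrightarrow> {u, v} \<in> E"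

definition connected_graph :: "'a set \<Rightarrow> 'a set set \<Rightarrow> bool" where
  "connected_graph V E \<longleftrightarrow> V \<noteq> {} \<and> (\<forall>u\<in>V. \<forall>v\<in>V. (adj E)\<^sup>*\<^sup>* u v)"

definition tree :: "'a set \<Rightarrow> 'a set set \<Rightarrow> bool" where
  "tree V E \<longleftrightarrow> simple_graph V E \<and> connected_graph V E \<and> card E = card V - 1"

definition dominating_set :: "'a set \<Rightarrow> 'a set set \<Rightarrow> 'a set \<Rightarrow> bool" where
  "dominating_set V E S \<longleftrightarrow> S \<subseteq> V \<and> (\<forall>v\<in>V. v \<in> S \<or> (\<exists>u\<in>S. adj E u v))"

definition domination_number :: "'a set \<Rightarrow> 'a set set \<Rightarrow> nat" where
  "domination_number V E = (LEAST k. \<exists>S. dominating_set V E S \<and> card S = k)"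

definition num_dom_sets :: "'a set \<Rightarrow> 'a set set \<Rightarrow> nat \<Rightarrow> nat" where
  "num_dom_sets V E i = card {S. dominating_set V E S \<and> card S = i}"

end

theory Submission
  imports Defs
begin

text \<open>Call a vertex \<open>v\<close> of a dominating set \<open>T\<close> removable if \<open>T - {v}\<close> still dominates,
  and let \<open>r(T)\<close> be their number. Mapping \<open>(S, v)\<close>, with \<open>S\<close> dominating of size \<open>k\<close> and
  \<open>v \<notin> S\<close>, to \<open>(S \<union> {v}, v)\<close> shows that \<open>d(k) * (n - k)\<close> is at most the sum of \<open>r(T)\<close>
  over the dominating sets \<open>T\<close> of size \<open>k + 1\<close>; hence \<open>d(k) \<le> d(k + 1)\<close> as soon as
  \<open>r(T) \<le> n - k\<close> for all of them. In a tree \<open>r(T) \<le> 2 (|T| - \<gamma>)\<close>, which is such a bound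
  exactly when \<open>3 (k + 1) \<le> n + 2 \<gamma> + 1\<close>. For this inequality, contract every vertex
  outside \<open>T\<close> into a chosen neighbour in \<open>T\<close>: the contracted graph on \<open>T\<close> is again a
  forest, so it has an independent set \<open>X\<close> containing half of the removable vertices, and
  \<open>T - X\<close> is still dominating.\<close>

lemma simple_graph_finite_edges: "simple_graph V E \<Longrightarrow> finite E"
  unfolding simple_graph_def by (meson PowI finite_Pow_iff finite_subset subsetI)

lemma rtranclp_adj_crossing_edge:
  assumes "(adj E)\<^sup>*\<^sup>* u v" "u \<in> S" "v \<notin> S"
  shows "\<exists>a b. {a, b} \<in> E \<and> a \<in> S \<and> b \<notin> S"
  using assms
proof (induction rule: rtranclp_induct)
  case (step y z)
  then show ?case by (cases "y \<in> S") (auto simp: adj_def)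
qed simp

lemma connected_card_Diff_le_crossing_edges:
  assumes sg: "simple_graph V E" and cg: "connected_graph V E"
  shows "S \<subseteq> V \<Longrightarrow> S \<noteq> {} \<Longrightarrow> card (V - S) \<le> card {e\<in>E. \<not> e \<subseteq> S}"
proof (induction "card (V - S)" arbitrary: S)
  case (Suc m)
  have fin_V: "finite V" and fin_E: "finite E"
    using sg simple_graph_finite_edges by (auto simp: simple_graph_def)
  obtain u v where "u \<in> S" "v \<in> V - S"
    using Suc.hyps(2) Suc.prems(2) by (metis card.empty ex_in_conv nat.distinct(1))
  moreover from this have "(adj E)\<^sup>*\<^sup>* u v"
    using cg Suc.prems(1) unfolding connected_graph_def by blast
  ultimately obtain a b where ab: "{a, b} \<in> E" "a \<in> S" "b \<notin> S"
    using rtranclp_adj_crossing_edge by (metis DiffD2)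
  have "b \<in> V" using sg ab(1) by (auto simp: simple_graph_def)
  have "V - insert b S = (V - S) - {b}" by auto
  then have "card (V - insert b S) = m"
    using Suc.hyps(2) \<open>b \<in> V\<close> ab(3) fin_V by (simp add: card_Diff_singleton)
  then have "m \<le> card {e\<in>E. \<not> e \<subseteq> insert b S}"
    using Suc.hyps(1) Suc.prems \<open>b \<in> V\<close> by blast
  also have "\<dots> \<le> card ({e\<in>E. \<not> e \<subseteq> S} - {{a, b}})"
    using fin_E ab by (intro card_mono) auto
  also have "\<dots> < card {e\<in>E. \<not> e \<subseteq> S}"
    using fin_E ab by (intro card_Diff1_less) auto
  finally show ?case using Suc.hyps(2) by simp
qed simp

text \<open>For a family of 2-element sets this counting condition is equivalent to acyclicity.\<close>
definition forest_on :: "'a set set \<Rightarrow> 'a set \<Rightarrow> bool" where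
  "forest_on F S \<longleftrightarrow> (\<forall>S'\<subseteq>S. S' \<noteq> {} \<longrightarrow> card {e\<in>F. e \<subseteq> S'} \<le> card S' - 1)"

lemma forest_on_subset: "forest_on F S \<Longrightarrow> S' \<subseteq> S \<Longrightarrow> forest_on F S'"
  unfolding forest_on_def by blast

lemma tree_forest_on:
  assumes "tree V E"
  shows "forest_on E V"
  unfolding forest_on_def
proof (intro allI impI)
  fix S assume S: "S \<subseteq> V" "S \<noteq> {}"
  have sg: "simple_graph V E" and cg: "connected_graph V E" and card_E: "card E = card V - 1"
    using assms by (auto simp: tree_def)
  have fin_V: "finite V" and fin_E: "finite E"
    using sg simple_graph_finite_edges by (auto simp: simple_graph_def)
  have "E = {e\<in>E. e \<subseteq> S} \<union> {e\<in>E. \<not> e \<subseteq> S}" by blast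
  then have "card E = card {e\<in>E. e \<subseteq> S} + card {e\<in>E. \<not> e \<subseteq> S}"
    using fin_E by (metis (no_types, lifting) card_Un_disjoint disjoint_iff finite_Un mem_Collect_eq)
  moreover have "card (V - S) \<le> card {e\<in>E. \<not> e \<subseteq> S}"
    using connected_card_Diff_le_crossing_edges[OF sg cg S] .
  moreover have "card (V - S) = card V - card S" "card S \<le> card V" "card S \<ge> 1"
    using S fin_V by (auto simp: card_Diff_subset card_mono finite_subset Suc_leI card_gt_0_iff)
  ultimately show "card {e\<in>E. e \<subseteq> S} \<le> card S - 1"
    using card_E by linarith
qed

lemma forest_on_low_degree:
  assumes fin_S: "finite S" and "S \<noteq> {}" and two: "\<forall>e\<in>F. card e = 2" and "forest_on F S"
  shows "\<exists>v\<in>S. card {e\<in>F. e \<subseteq> S \<and> v \<in> e} \<le> 1"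
proof (rule ccontr)
  assume "\<not> ?thesis"
  then have deg: "\<forall>v\<in>S. 2 \<le> card {e\<in>{e\<in>F. e \<subseteq> S}. v \<in> e}" by auto
  have fin_F: "finite {e\<in>F. e \<subseteq> S}"
    using fin_S by (auto intro: finite_subset[of _ "Pow S"])
  have "\<forall>e\<in>{e\<in>F. e \<subseteq> S}. card {v\<in>S. v \<in> e} = 2"
  proof
    fix e assume "e \<in> {e\<in>F. e \<subseteq> S}"
    then have "{v\<in>S. v \<in> e} = e" "card e = 2" using two by auto
    then show "card {v\<in>S. v \<in> e} = 2" by simp
  qed
  then have handshake: "(\<Sum>v\<in>S. card {e\<in>{e\<in>F. e \<subseteq> S}. v \<in> e}) = 2 * card {e\<in>F. e \<subseteq> S}"
    by (rule sum_multicount[OF fin_S fin_F])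
  have "2 * card S \<le> (\<Sum>v\<in>S. card {e\<in>{e\<in>F. e \<subseteq> S}. v \<in> e})"
    using sum_mono[of S "\<lambda>_. 2::nat"] deg by (simp add: mult.commute)
  moreover have "card {e\<in>F. e \<subseteq> S} \<le> card S - 1" "card S \<ge> 1"
    using assms by (auto simp: forest_on_def Suc_leI card_gt_0_iff)
  ultimately show False using handshake by linarith
qed

lemma forest_on_leaf:
  assumes "finite S" "S \<noteq> {}" and two: "\<forall>e\<in>F. card e = 2" and "forest_on F S"
  obtains v D where "v \<in> D" "D \<subseteq> S" "card D \<le> 2" "\<forall>e\<in>F. e \<subseteq> S \<longrightarrow> v \<in> e \<longrightarrow> e \<subseteq> D"
proof -
  obtain v where v: "v \<in> S" and deg: "card {e\<in>F. e \<subseteq> S \<and> v \<in> e} \<le> 1"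
    using forest_on_low_degree[OF assms] by blast
  let ?N = "{e\<in>F. e \<subseteq> S \<and> v \<in> e}"
  have "finite ?N"
    using \<open>finite S\<close> by (auto intro: finite_subset[of _ "Pow S"])
  then have single: "\<forall>e\<in>?N. \<forall>e'\<in>?N. e = e'"
    using deg card_le_Suc0_iff_eq by auto
  show thesis
  proof (cases "?N = {}")
    case True
    then show thesis using that[of v "{v}"] v by auto
  next
    case False
    then obtain e where e: "e \<in> ?N" by blast
    then have "\<forall>e'\<in>F. e' \<subseteq> S \<longrightarrow> v \<in> e' \<longrightarrow> e' \<subseteq> e" using single by blast
    then show thesis using that[of v e] e two by auto
  qed
qed

lemma forest_on_independent_half:
  assumes "finite S" "\<forall>e\<in>F. card e = 2" "forest_on F S"
  shows "\<exists>X\<subseteq>S. card S \<le> 2 * card X \<and> (\<forall>e\<in>F. \<not> e \<subseteq> X)"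
  using assms
proof (induction "card S" arbitrary: S rule: less_induct)
  case less
  show ?case
  proof (cases "S = {}")
    case True
    then show ?thesis using less.prems(2) by (auto intro!: exI[of _ "{}"])
  next
    case False
    obtain v D where D: "v \<in> D" "D \<subseteq> S" "card D \<le> 2"
      and closed: "\<forall>e\<in>F. e \<subseteq> S \<longrightarrow> v \<in> e \<longrightarrow> e \<subseteq> D"
      using forest_on_leaf[OF less.prems(1) False less.prems(2,3)] .
    have fin_D: "finite D" using D(2) less.prems(1) finite_subset by blast
    have card_S: "card S = card (S - D) + card D"
      using card_Diff_subset[OF fin_D D(2)] card_mono[OF less.prems(1) D(2)] by simp
    moreover have "card D \<noteq> 0" using D(1) fin_D by auto
    ultimately have "card (S - D) < card S" by linarith
    moreover have "forest_on F (S - D)" using forest_on_subset[OF less.prems(3)] by blast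
    ultimately obtain X where X: "X \<subseteq> S - D" "card (S - D) \<le> 2 * card X"
      and indep: "\<forall>e\<in>F. \<not> e \<subseteq> X"
      using less.hyps[of "S - D"] less.prems(1,2) by (meson finite_Diff)
    have "finite X" using X(1) less.prems(1) finite_subset[of X S] by blast
    moreover have "v \<notin> X" using X(1) D(1) by blast
    ultimately have "card (insert v X) = Suc (card X)" by simp
    then have "card S \<le> 2 * card (insert v X)"
      using card_S X(2) D(3) by linarith
    moreover have "insert v X \<subseteq> S" using X(1) D(1,2) by blast
    moreover have "\<not> e \<subseteq> insert v X" if e: "e \<in> F" for e
    proof
      assume sub: "e \<subseteq> insert v X"
      show False
      proof (cases "v \<in> e")
        case True
        have "e \<subseteq> S" using sub X(1) D(1,2) by blast
        then have "e \<subseteq> D" using closed e True by blast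
        then have "e \<subseteq> {v}" using sub X(1) by blast
        then have "card e \<le> 1" using card_mono[of "{v}" e] by simp
        then show False using e less.prems(2) by simp
      next
        case False
        then show False using sub e indep by blast
      qed
    qed
    ultimately show ?thesis by blast
  qed
qed

text \<open>The graph on \<open>T\<close> obtained by contracting each edge \<open>{w, c w}\<close> with \<open>w \<notin> T\<close> into
  \<open>c w\<close>.\<close>
definition contracted_edges :: "'a set \<Rightarrow> 'a set set \<Rightarrow> 'a set \<Rightarrow> ('a \<Rightarrow> 'a) \<Rightarrow> 'a set set" where
  "contracted_edges V E T c =
     {e\<in>E. e \<subseteq> T} \<union> {{c w, b} | w b. w \<in> V - T \<and> b \<in> T \<and> {w, b} \<in> E \<and> b \<noteq> c w}"

definition contracted_pairs :: "'a set \<Rightarrow> 'a set set \<Rightarrow> 'a set \<Rightarrow> ('a \<Rightarrow> 'a) \<Rightarrow> 'a set \<Rightarrow> ('a \<times> 'a) set" where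
  "contracted_pairs V E T c S =
     {(w, b). w \<in> V - T \<and> b \<in> S \<and> {w, b} \<in> E \<and> b \<noteq> c w \<and> c w \<in> S}"

lemma finite_contracted_pairs:
  "finite V \<Longrightarrow> S \<subseteq> V \<Longrightarrow> finite (contracted_pairs V E T c S)"
  by (rule finite_subset[of _ "V \<times> S"]) (auto simp: contracted_pairs_def finite_subset)

lemma card_contracted_edges_within_le:
  assumes "finite V" "S \<subseteq> V"
  shows "card {e\<in>contracted_edges V E T c. e \<subseteq> S}
           \<le> card {e\<in>E. e \<subseteq> S} + card (contracted_pairs V E T c S)"
proof -
  let ?A = "{e\<in>E. e \<subseteq> S}" and ?P = "contracted_pairs V E T c S"
  have fin_A: "finite ?A" using assms by (auto intro: finite_subset[of _ "Pow S"] finite_subset)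
  have fin_P: "finite ?P" using finite_contracted_pairs[OF assms] .
  have "{e\<in>contracted_edges V E T c. e \<subseteq> S} \<subseteq> ?A \<union> (\<lambda>(w, b). {c w, b}) ` ?P"
    unfolding contracted_edges_def contracted_pairs_def by auto
  then have "card {e\<in>contracted_edges V E T c. e \<subseteq> S} \<le> card (?A \<union> (\<lambda>(w, b). {c w, b}) ` ?P)"
    using fin_A fin_P by (intro card_mono) auto
  also have "\<dots> \<le> card ?A + card ?P"
    using card_Un_le[of ?A "(\<lambda>(w, b). {c w, b}) ` ?P"] card_image_le[OF fin_P, of "\<lambda>(w, b). {c w, b}"]
    by linarith
  finally show ?thesis .
qed

text \<open>Each pair \<open>(w, b)\<close> gives the tree edge \<open>{w, b}\<close>, and each contracted vertex \<open>w\<close> the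
  edge \<open>{w, c w}\<close>; together with the edges inside \<open>S\<close> these are distinct edges inside
  \<open>S \<union> W\<close>.\<close>
lemma card_contracted_pairs_le:
  assumes fin_V: "finite V" and "S \<subseteq> T" "T \<subseteq> V"
    and c: "\<forall>w\<in>V - T. c w \<in> T \<and> {w, c w} \<in> E"
  defines "P \<equiv> contracted_pairs V E T c S"
  defines "W \<equiv> fst ` P"
  shows "card {e\<in>E. e \<subseteq> S} + card P + card W \<le> card {e\<in>E. e \<subseteq> S \<union> W}"
proof -
  define A where "A = {e\<in>E. e \<subseteq> S}"
  define B1 where "B1 = (\<lambda>(w, b). {w, b}) ` P"
  define B2 where "B2 = (\<lambda>w. {w, c w}) ` W"
  have fin_S: "finite S" using assms(2,3) fin_V by (meson finite_subset subset_trans)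
  have fin_A: "finite A" using fin_S by (auto simp: A_def intro: finite_subset[of _ "Pow S"])
  have fin_P: "finite P" unfolding P_def using finite_contracted_pairs assms(2,3) fin_V by blast
  have fin_W: "finite W" using fin_P by (simp add: W_def)
  have W: "W \<subseteq> V - T" "\<forall>w\<in>W. c w \<in> S" by (auto simp: W_def P_def contracted_pairs_def)
  have "inj_on (\<lambda>(w, b). {w, b}) P"
  proof (rule inj_onI, clarify)
    fix w b w' b' assume "(w, b) \<in> P" "(w', b') \<in> P" and eq: "{w, b} = {w', b'}"
    then have "w \<notin> S" "w' \<notin> S" "b \<in> S" "b' \<in> S"
      using assms(2) by (auto simp: P_def contracted_pairs_def)
    then show "w = w' \<and> b = b'" using eq by (metis doubleton_eq_iff)
  qed
  then have card_B1: "card B1 = card P" by (simp add: B1_def card_image)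
  have "inj_on (\<lambda>w. {w, c w}) W"
  proof (rule inj_onI)
    fix w w' assume "w \<in> W" "w' \<in> W" and eq: "{w, c w} = {w', c w'}"
    then have "w \<notin> T" "w' \<notin> T" "c w \<in> T" "c w' \<in> T" using W assms(2) by auto
    then show "w = w'" using eq by (metis doubleton_eq_iff)
  qed
  then have card_B2: "card B2 = card W" by (simp add: B2_def card_image)
  have "\<forall>e\<in>A. e \<subseteq> T" "\<forall>e\<in>B1. \<not> e \<subseteq> T" "\<forall>e\<in>B2. \<not> e \<subseteq> T"
    using assms(2) W(1) by (auto simp: A_def B1_def B2_def P_def contracted_pairs_def)
  moreover have "B1 \<inter> B2 = {}"
  proof (rule ccontr)
    assume "B1 \<inter> B2 \<noteq> {}"
    then obtain w b w' where "(w, b) \<in> P" "w' \<in> W" and eq: "{w, b} = {w', c w'}"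
      by (auto simp: B1_def B2_def)
    then have "w \<notin> T" "w' \<notin> T" "b \<in> T" "b \<noteq> c w"
      using assms(2) W by (auto simp: P_def contracted_pairs_def)
    then show False using eq by (metis doubleton_eq_iff)
  qed
  moreover have "finite B1" "finite B2" using fin_P fin_W by (auto simp: B1_def B2_def)
  ultimately have "card A + card B1 + card B2 = card (A \<union> B1 \<union> B2)"
    using fin_A card_Un_disjoint[of A B1] card_Un_disjoint[of "A \<union> B1" B2] by fastforce
  also have "\<dots> \<le> card {e\<in>E. e \<subseteq> S \<union> W}"
  proof (rule card_mono)
    show "finite {e\<in>E. e \<subseteq> S \<union> W}"
      using fin_S fin_W by (auto intro: finite_subset[of _ "Pow (S \<union> W)"])
    have "{w, b} \<in> {e\<in>E. e \<subseteq> S \<union> W}" if "(w, b) \<in> P" for w b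
    proof -
      have "w \<in> W" using that unfolding W_def by (metis fstI image_eqI)
      then show ?thesis using that by (auto simp: P_def contracted_pairs_def)
    qed
    moreover have "B2 \<subseteq> {e\<in>E. e \<subseteq> S \<union> W}" using W c by (auto simp: B2_def)
    ultimately show "A \<union> B1 \<union> B2 \<subseteq> {e\<in>E. e \<subseteq> S \<union> W}" by (auto simp: A_def B1_def)
  qed
  finally show ?thesis using card_B1 card_B2 by (simp add: A_def)
qed

lemma forest_on_contracted_edges:
  assumes fin_V: "finite V" and forest: "forest_on E V" and "T \<subseteq> V"
    and c: "\<forall>w\<in>V - T. c w \<in> T \<and> {w, c w} \<in> E"
  shows "forest_on (contracted_edges V E T c) T"
  unfolding forest_on_def
proof (intro allI impI)
  fix S assume S: "S \<subseteq> T" "S \<noteq> {}"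
  define W where "W = fst ` contracted_pairs V E T c S"
  have "W \<subseteq> V - T" by (auto simp: W_def contracted_pairs_def)
  then have "S \<union> W \<subseteq> V" "card (S \<union> W) = card S + card W"
    using S(1) \<open>T \<subseteq> V\<close> fin_V by (auto intro!: card_Un_disjoint intro: finite_subset)
  moreover have "card {e\<in>E. e \<subseteq> S \<union> W} \<le> card (S \<union> W) - 1"
    using forest \<open>S \<union> W \<subseteq> V\<close> S(2) unfolding forest_on_def by blast
  ultimately show "card {e\<in>contracted_edges V E T c. e \<subseteq> S} \<le> card S - 1"
    using card_contracted_edges_within_le[OF fin_V, of S E T c]
      card_contracted_pairs_le[OF fin_V S(1) \<open>T \<subseteq> V\<close> c]
    unfolding W_def using S(1) \<open>T \<subseteq> V\<close> by fastforce
qed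

definition removable :: "'a set \<Rightarrow> 'a set set \<Rightarrow> 'a set \<Rightarrow> 'a set" where
  "removable V E T = {v\<in>T. dominating_set V E (T - {v})}"

lemma domination_number_le_card: "dominating_set V E S \<Longrightarrow> domination_number V E \<le> card S"
  unfolding domination_number_def by (rule Least_le) blast

lemma dominating_set_insert: "dominating_set V E S \<Longrightarrow> v \<in> V \<Longrightarrow> dominating_set V E (insert v S)"
  by (auto simp: dominating_set_def)

text \<open>A vertex whose dominator lies in \<open>X\<close> is still dominated by some vertex of \<open>T\<close> adjacent to
  that dominator in the contracted graph, which therefore is not in \<open>X\<close>.\<close>
lemma dominating_set_Diff_independent:
  assumes dom: "dominating_set V E T" and c: "\<forall>w\<in>V - T. c w \<in> T \<and> {w, c w} \<in> E"
    and X: "X \<subseteq> removable V E T" and indep: "\<forall>e\<in>contracted_edges V E T c. \<not> e \<subseteq> X"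
  shows "dominating_set V E (T - X)"
  unfolding dominating_set_def
proof (intro conjI ballI)
  show "T - X \<subseteq> V" using dom by (auto simp: dominating_set_def)
next
  fix v assume v: "v \<in> V"
  show "v \<in> T - X \<or> (\<exists>u\<in>T - X. adj E u v)"
  proof (cases "v \<in> T")
    case True
    show ?thesis
    proof (cases "v \<in> X")
      case vX: True
      then have "dominating_set V E (T - {v})" using X by (auto simp: removable_def)
      then obtain u where u: "u \<in> T - {v}" "adj E u v" using v by (auto simp: dominating_set_def)
      then have "{u, v} \<in> contracted_edges V E T c"
        using True by (auto simp: adj_def contracted_edges_def)
      then have "\<not> {u, v} \<subseteq> X" by (rule bspec[OF indep])
      then have "u \<notin> X" using vX by simp
      then show ?thesis using u by blast
    qed (use True in blast)
  next
    case False
    then have cv: "c v \<in> T" "{v, c v} \<in> E" using c v by auto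
    show ?thesis
    proof (cases "c v \<in> X")
      case cX: True
      then have "dominating_set V E (T - {c v})" using X by (auto simp: removable_def)
      then obtain u where u: "u \<in> T - {c v}" "adj E u v"
        using v False by (auto simp: dominating_set_def)
      moreover have "{v, u} \<in> E" using u(2) by (simp add: adj_def insert_commute)
      ultimately have "{c v, u} \<in> contracted_edges V E T c"
        using v False unfolding contracted_edges_def by auto
      then have "\<not> {c v, u} \<subseteq> X" by (rule bspec[OF indep])
      then have "u \<notin> X" using cX by simp
      then show ?thesis using u by blast
    next
      case False
      have "adj E (c v) v" using cv(2) by (simp add: adj_def insert_commute)
      then show ?thesis using cv(1) False by blast
    qed
  qed
qed

lemma card_removable_le:
  assumes tree: "tree V E" and dom: "dominating_set V E T"
  shows "card (removable V E T) + 2 * domination_number V E \<le> 2 * card T"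
proof -
  have sg: "simple_graph V E" using tree by (simp add: tree_def)
  have fin_V: "finite V" using sg by (simp add: simple_graph_def)
  have "T \<subseteq> V" using dom by (simp add: dominating_set_def)
  have fin_T: "finite T" using finite_subset[OF \<open>T \<subseteq> V\<close> fin_V] .
  have "\<exists>u. u \<in> T \<and> {w, u} \<in> E" if w: "w \<in> V - T" for w
  proof -
    obtain u where "u \<in> T" "adj E u w" using dom w by (auto simp: dominating_set_def)
    then show ?thesis by (auto simp: adj_def insert_commute)
  qed
  then obtain c where c: "\<forall>w\<in>V - T. c w \<in> T \<and> {w, c w} \<in> E"
    using bchoice[of "V - T" "\<lambda>w u. u \<in> T \<and> {w, u} \<in> E"] by blast
  have "removable V E T \<subseteq> T" by (auto simp: removable_def)
  have "forest_on (contracted_edges V E T c) (removable V E T)"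
    using forest_on_subset[OF forest_on_contracted_edges[OF fin_V tree_forest_on[OF tree] \<open>T \<subseteq> V\<close> c]
        \<open>removable V E T \<subseteq> T\<close>] .
  moreover have "\<forall>e\<in>contracted_edges V E T c. card e = 2"
    using sg c by (auto simp: contracted_edges_def simple_graph_def)
  moreover have "finite (removable V E T)"
    using finite_subset[OF \<open>removable V E T \<subseteq> T\<close> fin_T] .
  ultimately obtain X where X: "X \<subseteq> removable V E T" "card (removable V E T) \<le> 2 * card X"
    and indep: "\<forall>e\<in>contracted_edges V E T c. \<not> e \<subseteq> X"
    using forest_on_independent_half by metis
  have "domination_number V E \<le> card (T - X)"
    using domination_number_le_card[OF dominating_set_Diff_independent[OF dom c X(1) indep]] .
  moreover have "card (T - X) + card X = card T"
  proof -
    have "X \<subseteq> T" using X(1) \<open>removable V E T \<subseteq> T\<close> by blast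
    then show ?thesis using fin_T card_Diff_subset[of X T] card_mono[of T X] finite_subset[of X T] by simp
  qed
  ultimately show ?thesis using X(2) by linarith
qed

text \<open>Double counting of the pairs \<open>(S, v)\<close> with \<open>S\<close> dominating, \<open>|S| = k\<close> and \<open>v \<notin> S\<close>,
  via \<open>(S, v) \<mapsto> (S \<union> {v}, v)\<close>.\<close>
lemma num_dom_sets_mult_le_sum_removable:
  assumes fin_V: "finite V"
  shows "num_dom_sets V E k * (card V - k)
           \<le> (\<Sum>T | dominating_set V E T \<and> card T = Suc k. card (removable V E T))"
proof -
  define D where "D i = {S. dominating_set V E S \<and> card S = i}" for i
  have fin_D: "finite (D i)" for i
    using fin_V by (auto simp: D_def dominating_set_def intro: finite_subset[of _ "Pow V"])
  have fin_removable: "\<forall>T\<in>D (Suc k). finite (removable V E T)"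
  proof
    fix T assume "T \<in> D (Suc k)"
    then have "removable V E T \<subseteq> V" by (auto simp: D_def dominating_set_def removable_def)
    then show "finite (removable V E T)" using finite_subset fin_V by auto
  qed
  have "num_dom_sets V E k * (card V - k) = (\<Sum>S\<in>D k. card (V - S))"
  proof -
    have "card (V - S) = card V - k" if "S \<in> D k" for S
    proof -
      have "S \<subseteq> V" "card S = k" using that by (auto simp: D_def dominating_set_def)
      then show ?thesis using fin_V by (simp add: card_Diff_subset finite_subset)
    qed
    then show ?thesis by (simp add: num_dom_sets_def D_def[symmetric])
  qed
  also have "\<dots> = card (SIGMA S:D k. V - S)"
    using fin_D fin_V by simp
  also have "\<dots> \<le> card (SIGMA T:D (Suc k). removable V E T)"
  proof (rule card_inj_on_le)
    show "inj_on (\<lambda>(S, v). (insert v S, v)) (SIGMA S:D k. V - S)"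
      by (rule inj_onI) (auto simp: insert_ident)
    show "(\<lambda>(S, v). (insert v S, v)) ` (SIGMA S:D k. V - S) \<subseteq> (SIGMA T:D (Suc k). removable V E T)"
    proof -
      have "(insert v S, v) \<in> (SIGMA T:D (Suc k). removable V E T)" if "S \<in> D k" "v \<in> V - S" for S v
      proof -
        have "S \<subseteq> V" using that(1) by (simp add: D_def dominating_set_def)
        then have "finite S" using fin_V finite_subset by auto
        then show ?thesis using that by (auto simp: D_def removable_def dominating_set_insert)
      qed
      then show ?thesis by auto
    qed
    show "finite (SIGMA T:D (Suc k). removable V E T)"
      using fin_removable by (intro finite_SigmaI fin_D) blast
  qed
  also have "\<dots> = (\<Sum>T\<in>D (Suc k). card (removable V E T))"
    using fin_D fin_removable by simp
  finally show ?thesis by (simp add: D_def)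
qed

lemma num_dom_sets_le_Suc:
  assumes tree: "tree V E" and bound: "3 * k + 2 \<le> card V + 2 * domination_number V E"
  shows "num_dom_sets V E k \<le> num_dom_sets V E (Suc k)"
proof -
  have fin_V: "finite V" using tree by (simp add: tree_def simple_graph_def)
  have "domination_number V E \<le> card V"
    using domination_number_le_card[of V E V] by (simp add: dominating_set_def)
  then have k: "k < card V" using bound by linarith
  have "num_dom_sets V E k * (card V - k)
          \<le> (\<Sum>T | dominating_set V E T \<and> card T = Suc k. card (removable V E T))"
    using num_dom_sets_mult_le_sum_removable[OF fin_V] .
  also have "\<dots> \<le> num_dom_sets V E (Suc k) * (card V - k)"
  proof -
    have "card (removable V E T) \<le> card V - k"
      if "T \<in> {T. dominating_set V E T \<and> card T = Suc k}" for T
    proof -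
      have "card (removable V E T) + 2 * domination_number V E \<le> 2 * k + 2"
        using that card_removable_le[OF tree, of T] by simp
      then have "card (removable V E T) + k \<le> card V" using bound by linarith
      then show ?thesis by (simp add: le_diff_conv2)
    qed
    then have "(\<Sum>T | dominating_set V E T \<and> card T = Suc k. card (removable V E T))
                 \<le> of_nat (num_dom_sets V E (Suc k)) * (card V - k)"
      unfolding num_dom_sets_def by (rule sum_bounded_above)
    then show ?thesis by simp
  qed
  finally show ?thesis using k by simp
qed

theorem theorem3p5:
  fixes V :: "'a set" and E :: "'a set set"
  assumes "tree V E"
  shows "\<forall>i j. domination_number V E \<le> i \<and> i \<le> j \<and>
            j \<le> (card V + 2 * domination_number V E + 1) div 3 \<longrightarrow>
            num_dom_sets V E i \<le> num_dom_sets V E j"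
proof (intro allI impI)
  fix i j
  assume ij: "domination_number V E \<le> i \<and> i \<le> j \<and>
            j \<le> (card V + 2 * domination_number V E + 1) div 3"
  from ij have "i \<le> j" by simp
  then show "num_dom_sets V E i \<le> num_dom_sets V E j"
  proof (induction j rule: dec_induct)
    case (step m)
    then have "Suc m \<le> (card V + 2 * domination_number V E + 1) div 3" using ij by linarith
    then have "3 * m + 2 \<le> card V + 2 * domination_number V E"
      by (simp add: less_eq_div_iff_mult_less_eq)
    then show ?case using step.IH num_dom_sets_le_Suc[OF assms] by (meson le_trans)
  qed simp
qed

end
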